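(* Let $(\Omega,+)$ be a group and $a,b$ subgroups. Then for $x,z\in a^\top$ and $y\in{}^\top b$ one has $\Gamma(x,a,y,b,z)\in a^\top$, and for $x,z\in{}^\top b$ and $y\in a^\top$ one has $\Gamma(x,a,y,b,z)\in{}^\top b$. That is, the maps $\Pi^+_{ab}:a^\top\times{}^\top b\times a^\top\to a^\top$ and $\Pi^-_{ab}:{}^\top b\times a^\top\times{}^\top b\to{}^\top b$, both given by $(x,y,z)\mapsto\Gamma(x,a,y,b,z)$, are well-defined.
   Context: $(\Omega,+)$ is a group written additively but not necessarily abelian. For subsets $x,y$, $x\top y$ means every $\omega$ has a unique decomposition $\omega=\xi+\eta$ with $\xi\in x,\eta\in y$; $a^\top=\{x\subseteq\Omega: a\top x\}$, ${}^\top b=\{x\subseteq\Omega: x\top b\}$. $\Gamma(x,a,y,b,z)=\{\omega:\exists\alpha\in a,\beta\in b:\ \alpha+\omega+\beta\in y,\ \alpha+\omega\in z,\ \omega+\beta\in x\}$. *)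

theory Defs
  imports Main
begin

text \<open>The ambient group (Omega,+) is the type 'a of class group_add (additive, not
necessarily commutative); Omega = UNIV.\<close>

definition add_subgroup :: "'a::group_add set \<Rightarrow> bool" where
  "add_subgroup a \<longleftrightarrow> 0 \<in> a \<and> (\<forall>u\<in>a. \<forall>v\<in>a. u + v \<in> a) \<and> (\<forall>u\<in>a. - u \<in> a)"

definition transv :: "'a::group_add set \<Rightarrow> 'a set \<Rightarrow> bool" (infix "\<top>\<^sub>T" 50) where
  "x \<top>\<^sub>T y \<longleftrightarrow> (\<forall>\<omega>. \<exists>!p. fst p \<in> x \<and> snd p \<in> y \<and> \<omega> = fst p + snd p)"

definition right_transv :: "'a::group_add set \<Rightarrow> 'a set set" where
  "right_transv a = {x. a \<top>\<^sub>T x}"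

definition left_transv :: "'a::group_add set \<Rightarrow> 'a set set" where
  "left_transv b = {x. x \<top>\<^sub>T b}"

definition Gamma :: "'a::group_add set \<Rightarrow> 'a set \<Rightarrow> 'a set \<Rightarrow> 'a set \<Rightarrow> 'a set \<Rightarrow> 'a set" where
  "Gamma x a y b z = {\<omega>. \<exists>\<alpha>\<in>a. \<exists>\<beta>\<in>b. \<alpha> + \<omega> + \<beta> \<in> y \<and> \<alpha> + \<omega> \<in> z \<and> \<omega> + \<beta> \<in> x}"

end

theory Submission
  imports Defs
begin

text \<open>For a subgroup \<open>a\<close>, \<open>a \<top> x\<close> says that \<open>x\<close> meets every coset \<open>a + \<omega>\<close> exactly once;
dually \<open>x \<top> b\<close> says that \<open>x\<close> meets every coset \<open>\<omega> + b\<close> exactly once. Given \<open>\<omega>\<close>, choose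
\<open>\<zeta> \<in> z\<close> in \<open>a + \<omega>\<close>, then \<open>\<eta> \<in> y\<close> in \<open>\<zeta> + b\<close>, then \<open>\<xi> \<in> x\<close> in \<open>a + \<eta>\<close>: the element
\<open>\<xi> - \<eta> + \<zeta>\<close> lies in \<open>\<Gamma>(x,a,y,b,z)\<close> (with \<open>\<alpha> = \<eta> - \<xi>\<close>, \<open>\<beta> = -\<zeta> + \<eta>\<close>) and in \<open>a + \<omega>\<close>.
If two elements of \<open>\<Gamma>\<close> share an \<open>a\<close>-coset, uniqueness of coset representatives in \<open>z\<close>, \<open>y\<close>
and \<open>x\<close>, used in this order, forces them to coincide. The statement for left transversals
follows by inversion \<open>\<omega> \<mapsto> -\<omega>\<close>, which exchanges left and right transversals and maps
\<open>\<Gamma>(x,a,y,b,z)\<close> to \<open>\<Gamma>(-z,b,-y,a,-x)\<close>.\<close>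

lemma add_subgroup_zero: "add_subgroup a \<Longrightarrow> 0 \<in> a"
  and add_subgroup_add: "add_subgroup a \<Longrightarrow> u \<in> a \<Longrightarrow> v \<in> a \<Longrightarrow> u + v \<in> a"
  and add_subgroup_uminus: "add_subgroup a \<Longrightarrow> u \<in> a \<Longrightarrow> - u \<in> a"
  unfolding add_subgroup_def by blast+

lemma add_subgroup_diff: "add_subgroup a \<Longrightarrow> u \<in> a \<Longrightarrow> v \<in> a \<Longrightarrow> u - v \<in> a"
  by (metis add_subgroup_add add_subgroup_uminus diff_conv_add_uminus)

lemma ex1_param_cong:
  assumes P: "\<And>p. P p \<longleftrightarrow> (\<exists>u. p = f u \<and> Q u)" and "inj f"
  shows "(\<exists>!p. P p) \<longleftrightarrow> (\<exists>!u. Q u)"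
proof
  assume "\<exists>!p. P p"
  then obtain p where p: "P p" "\<And>p'. P p' \<Longrightarrow> p' = p" by blast
  then obtain u where "Q u" "p = f u" using P by blast
  show "\<exists>!u. Q u"
  proof (rule ex1I)
    show "Q u" by fact
    show "u' = u" if "Q u'" for u'
      using P p(2) \<open>p = f u\<close> \<open>inj f\<close> that by (metis injD)
  qed
next
  assume "\<exists>!u. Q u"
  then obtain u where u: "Q u" "\<And>u'. Q u' \<Longrightarrow> u' = u" by blast
  show "\<exists>!p. P p"
  proof (rule ex1I)
    show "P (f u)" using P u(1) by blast
    show "p = f u" if "P p" for p
      using P u(2) that by blast
  qed
qed

lemma transv_iff_unique_right:
  "x \<top>\<^sub>T y \<longleftrightarrow> (\<forall>\<omega>. \<exists>!\<eta>. \<eta> \<in> y \<and> \<omega> - \<eta> \<in> x)"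
  unfolding transv_def
proof (intro all_cong1 ex1_param_cong)
  show "inj (\<lambda>\<eta>. (\<omega> - \<eta>, \<eta>))" for \<omega> :: 'a
    by (rule injI) simp
qed (auto simp: eq_diff_eq)

lemma transv_iff_unique_left:
  "x \<top>\<^sub>T y \<longleftrightarrow> (\<forall>\<omega>. \<exists>!\<xi>. \<xi> \<in> x \<and> - \<xi> + \<omega> \<in> y)"
  unfolding transv_def
proof (intro all_cong1 ex1_param_cong)
  show "inj (\<lambda>\<xi>. (\<xi>, - \<xi> + \<omega>))" for \<omega> :: 'a
    by (rule injI) simp
qed (auto simp: add.assoc[symmetric])

lemma right_transv_add_subgroup_iff:
  assumes "add_subgroup a"
  shows "a \<top>\<^sub>T x \<longleftrightarrow>
    (\<forall>\<omega>. \<exists>\<xi>\<in>x. \<omega> - \<xi> \<in> a) \<and> (\<forall>\<xi>\<in>x. \<forall>\<xi>'\<in>x. \<xi> - \<xi>' \<in> a \<longrightarrow> \<xi> = \<xi>')"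
  unfolding transv_iff_unique_right
proof (intro iffI conjI allI ballI impI)
  fix \<xi> \<xi>' assume "\<forall>\<omega>. \<exists>!\<xi>. \<xi> \<in> x \<and> \<omega> - \<xi> \<in> a" "\<xi> \<in> x" "\<xi>' \<in> x" "\<xi> - \<xi>' \<in> a"
  moreover have "\<xi> - \<xi> \<in> a" using add_subgroup_zero[OF assms] by simp
  ultimately show "\<xi> = \<xi>'" by blast
next
  fix \<omega>
  assume "(\<forall>\<omega>. \<exists>\<xi>\<in>x. \<omega> - \<xi> \<in> a) \<and> (\<forall>\<xi>\<in>x. \<forall>\<xi>'\<in>x. \<xi> - \<xi>' \<in> a \<longrightarrow> \<xi> = \<xi>')"
  then obtain \<xi> where \<xi>: "\<xi> \<in> x" "\<omega> - \<xi> \<in> a"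
    and unique: "\<forall>\<xi>\<in>x. \<forall>\<xi>'\<in>x. \<xi> - \<xi>' \<in> a \<longrightarrow> \<xi> = \<xi>'" by blast
  show "\<exists>!\<xi>. \<xi> \<in> x \<and> \<omega> - \<xi> \<in> a"
  proof (rule ex1I)
    show "\<xi> \<in> x \<and> \<omega> - \<xi> \<in> a" using \<xi> by blast
    fix \<xi>' assume \<xi>': "\<xi>' \<in> x \<and> \<omega> - \<xi>' \<in> a"
    have "\<xi>' - \<xi> = - (\<omega> - \<xi>') + (\<omega> - \<xi>)"
      by (simp add: add_diff_eq)
    also have "\<dots> \<in> a"
      using \<xi> \<xi>' by (blast intro: add_subgroup_add add_subgroup_uminus assms)
    finally show "\<xi>' = \<xi>" using unique \<xi> \<xi>' by blast
  qed
qed blast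

lemma left_transv_add_subgroup_iff:
  assumes "add_subgroup b"
  shows "x \<top>\<^sub>T b \<longleftrightarrow>
    (\<forall>\<omega>. \<exists>\<xi>\<in>x. - \<xi> + \<omega> \<in> b) \<and> (\<forall>\<xi>\<in>x. \<forall>\<xi>'\<in>x. - \<xi> + \<xi>' \<in> b \<longrightarrow> \<xi> = \<xi>')"
  unfolding transv_iff_unique_left
proof (intro iffI conjI allI ballI impI)
  fix \<xi> \<xi>' assume "\<forall>\<omega>. \<exists>!\<xi>. \<xi> \<in> x \<and> - \<xi> + \<omega> \<in> b" "\<xi> \<in> x" "\<xi>' \<in> x" "- \<xi> + \<xi>' \<in> b"
  moreover have "- \<xi>' + \<xi>' \<in> b" using add_subgroup_zero[OF assms] by simp
  ultimately show "\<xi> = \<xi>'" by blast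
next
  fix \<omega>
  assume "(\<forall>\<omega>. \<exists>\<xi>\<in>x. - \<xi> + \<omega> \<in> b) \<and> (\<forall>\<xi>\<in>x. \<forall>\<xi>'\<in>x. - \<xi> + \<xi>' \<in> b \<longrightarrow> \<xi> = \<xi>')"
  then obtain \<xi> where \<xi>: "\<xi> \<in> x" "- \<xi> + \<omega> \<in> b"
    and unique: "\<forall>\<xi>\<in>x. \<forall>\<xi>'\<in>x. - \<xi> + \<xi>' \<in> b \<longrightarrow> \<xi> = \<xi>'" by blast
  show "\<exists>!\<xi>. \<xi> \<in> x \<and> - \<xi> + \<omega> \<in> b"
  proof (rule ex1I)
    show "\<xi> \<in> x \<and> - \<xi> + \<omega> \<in> b" using \<xi> by blast
    fix \<xi>' assume \<xi>': "\<xi>' \<in> x \<and> - \<xi>' + \<omega> \<in> b"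
    have "- \<xi>' + \<xi> = (- \<xi>' + \<omega>) + - (- \<xi> + \<omega>)"
      by (simp add: minus_add add.assoc del: add_uminus_conv_diff)
    also have "\<dots> \<in> b"
      using \<xi> \<xi>' by (blast intro: add_subgroup_add add_subgroup_uminus assms)
    finally show "\<xi>' = \<xi>" using unique \<xi> \<xi>' by blast
  qed
qed blast

lemma Gamma_meets_right_coset:
  assumes a: "add_subgroup a" and b: "add_subgroup b"
    and x: "a \<top>\<^sub>T x" and z: "a \<top>\<^sub>T z" and y: "y \<top>\<^sub>T b"
  shows "\<exists>\<gamma>\<in>Gamma x a y b z. \<omega> - \<gamma> \<in> a"
proof -
  obtain \<zeta> where "\<zeta> \<in> z" "\<omega> - \<zeta> \<in> a"
    using z unfolding right_transv_add_subgroup_iff[OF a] by blast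
  obtain \<eta> where "\<eta> \<in> y" "- \<eta> + \<zeta> \<in> b"
    using y unfolding left_transv_add_subgroup_iff[OF b] by blast
  obtain \<xi> where "\<xi> \<in> x" "\<eta> - \<xi> \<in> a"
    using x unfolding right_transv_add_subgroup_iff[OF a] by blast
  define \<gamma> where "\<gamma> = \<xi> - \<eta> + \<zeta>"
  have "- \<zeta> + \<eta> \<in> b"
    using add_subgroup_uminus[OF b \<open>- \<eta> + \<zeta> \<in> b\<close>] by (simp add: minus_add)
  moreover have "\<eta> - \<xi> + \<gamma> = \<zeta>" "\<gamma> + (- \<zeta> + \<eta>) = \<xi>" "\<zeta> + (- \<zeta> + \<eta>) = \<eta>"
    unfolding \<gamma>_def by (simp_all add: diff_conv_add_uminus add.assoc del: add_uminus_conv_diff)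
  ultimately have "\<gamma> \<in> Gamma x a y b z"
    unfolding Gamma_def using \<open>\<eta> - \<xi> \<in> a\<close> \<open>\<xi> \<in> x\<close> \<open>\<eta> \<in> y\<close> \<open>\<zeta> \<in> z\<close> by force
  moreover have "\<omega> - \<gamma> = (\<omega> - \<zeta>) + (\<eta> - \<xi>)"
    unfolding \<gamma>_def by (simp add: diff_conv_add_uminus add.assoc minus_add del: add_uminus_conv_diff)
  then have "\<omega> - \<gamma> \<in> a"
    using \<open>\<omega> - \<zeta> \<in> a\<close> \<open>\<eta> - \<xi> \<in> a\<close> by (simp add: add_subgroup_add[OF a])
  ultimately show ?thesis ..
qed

lemma Gamma_right_coset_unique:
  assumes a: "add_subgroup a" and b: "add_subgroup b"
    and x: "a \<top>\<^sub>T x" and z: "a \<top>\<^sub>T z" and y: "y \<top>\<^sub>T b"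
    and "\<omega> \<in> Gamma x a y b z" "\<omega>' \<in> Gamma x a y b z" "\<omega> - \<omega>' \<in> a"
  shows "\<omega> = \<omega>'"
proof -
  obtain \<alpha> \<beta> \<alpha>' \<beta>' where "\<alpha> \<in> a" "\<beta> \<in> b" "\<alpha> + \<omega> + \<beta> \<in> y" "\<alpha> + \<omega> \<in> z" "\<omega> + \<beta> \<in> x"
    and "\<alpha>' \<in> a" "\<beta>' \<in> b" "\<alpha>' + \<omega>' + \<beta>' \<in> y" "\<alpha>' + \<omega>' \<in> z" "\<omega>' + \<beta>' \<in> x"
    using \<open>\<omega> \<in> Gamma x a y b z\<close> \<open>\<omega>' \<in> Gamma x a y b z\<close> unfolding Gamma_def by blast
  have "(\<alpha> + \<omega>) - (\<alpha>' + \<omega>') = \<alpha> + (\<omega> - \<omega>') - \<alpha>'"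
    by (simp add: diff_conv_add_uminus add.assoc minus_add del: add_uminus_conv_diff)
  also have "\<dots> \<in> a"
    using \<open>\<alpha> \<in> a\<close> \<open>\<omega> - \<omega>' \<in> a\<close> \<open>\<alpha>' \<in> a\<close> by (simp add: add_subgroup_add add_subgroup_diff a)
  finally have z_eq: "\<alpha> + \<omega> = \<alpha>' + \<omega>'"
    using z \<open>\<alpha> + \<omega> \<in> z\<close> \<open>\<alpha>' + \<omega>' \<in> z\<close> unfolding right_transv_add_subgroup_iff[OF a] by blast
  have "- (\<alpha> + \<omega> + \<beta>) + (\<alpha>' + \<omega>' + \<beta>') = - \<beta> + \<beta>'"
    unfolding z_eq by (simp add: diff_conv_add_uminus add.assoc minus_add del: add_uminus_conv_diff)
  also have "\<dots> \<in> b"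
    using \<open>\<beta> \<in> b\<close> \<open>\<beta>' \<in> b\<close> by (simp add: add_subgroup_add add_subgroup_uminus b)
  finally have "\<alpha> + \<omega> + \<beta> = \<alpha>' + \<omega>' + \<beta>'"
    using y \<open>\<alpha> + \<omega> + \<beta> \<in> y\<close> \<open>\<alpha>' + \<omega>' + \<beta>' \<in> y\<close>
    unfolding left_transv_add_subgroup_iff[OF b] by blast
  then have "\<beta> = \<beta>'"
    unfolding z_eq by (simp add: add.assoc)
  have "(\<omega> + \<beta>) - (\<omega>' + \<beta>') = \<omega> - \<omega>'"
    unfolding \<open>\<beta> = \<beta>'\<close> by (simp add: diff_conv_add_uminus add.assoc minus_add del: add_uminus_conv_diff)
  also have "\<dots> \<in> a" by fact
  finally have "\<omega> + \<beta> = \<omega>' + \<beta>'"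
    using x \<open>\<omega> + \<beta> \<in> x\<close> \<open>\<omega>' + \<beta>' \<in> x\<close> unfolding right_transv_add_subgroup_iff[OF a] by blast
  then show ?thesis
    using \<open>\<beta> = \<beta>'\<close> by simp
qed

lemma right_transv_Gamma:
  assumes "add_subgroup a" "add_subgroup b" "a \<top>\<^sub>T x" "a \<top>\<^sub>T z" "y \<top>\<^sub>T b"
  shows "a \<top>\<^sub>T Gamma x a y b z"
  unfolding right_transv_add_subgroup_iff[OF assms(1)]
  using Gamma_meets_right_coset[OF assms] Gamma_right_coset_unique[OF assms] by blast

lemma mem_uminus_image_iff: "u \<in> uminus ` A \<longleftrightarrow> - u \<in> (A :: 'a::group_add set)"
  by (metis image_eqI imageE minus_minus)

lemma uminus_image_add_subgroup:
  assumes "add_subgroup a"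
  shows "uminus ` a = a"
  using add_subgroup_uminus[OF assms] by (fastforce simp: mem_uminus_image_iff)

lemma transv_uminus_iff: "uminus ` y \<top>\<^sub>T uminus ` x \<longleftrightarrow> x \<top>\<^sub>T y"
proof -
  have "(\<exists>!\<eta>. \<eta> \<in> uminus ` x \<and> - \<omega> - \<eta> \<in> uminus ` y) \<longleftrightarrow> (\<exists>!\<xi>. \<xi> \<in> x \<and> - \<xi> + \<omega> \<in> y)" for \<omega>
  proof (rule ex1_param_cong)
    fix \<eta>
    have "\<eta> \<in> uminus ` x \<and> - \<omega> - \<eta> \<in> uminus ` y \<longleftrightarrow> - \<eta> \<in> x \<and> - (- \<eta>) + \<omega> \<in> y"
      by (simp add: mem_uminus_image_iff)
    then show "\<eta> \<in> uminus ` x \<and> - \<omega> - \<eta> \<in> uminus ` y \<longleftrightarrow> (\<exists>\<xi>. \<eta> = - \<xi> \<and> \<xi> \<in> x \<and> - \<xi> + \<omega> \<in> y)"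
      by (metis minus_minus)
    show "inj (uminus :: 'a \<Rightarrow> 'a)" by (rule injI) simp
  qed
  note reflect = this
  show ?thesis
    unfolding transv_iff_unique_right[of "uminus ` y"] transv_iff_unique_left[of x]
  proof (intro iffI allI)
    fix \<omega> assume "\<forall>\<omega>. \<exists>!\<eta>. \<eta> \<in> uminus ` x \<and> \<omega> - \<eta> \<in> uminus ` y"
    then have "\<exists>!\<eta>. \<eta> \<in> uminus ` x \<and> - \<omega> - \<eta> \<in> uminus ` y" ..
    then show "\<exists>!\<xi>. \<xi> \<in> x \<and> - \<xi> + \<omega> \<in> y" by (rule reflect[THEN iffD1])
  next
    fix \<omega> assume "\<forall>\<omega>. \<exists>!\<xi>. \<xi> \<in> x \<and> - \<xi> + \<omega> \<in> y"
    then have "\<exists>!\<xi>. \<xi> \<in> x \<and> - \<xi> + - \<omega> \<in> y" ..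
    then show "\<exists>!\<eta>. \<eta> \<in> uminus ` x \<and> \<omega> - \<eta> \<in> uminus ` y"
      by (rule reflect[of "- \<omega>", unfolded minus_minus, THEN iffD2])
  qed
qed

lemma uminus_Gamma_subset:
  "uminus ` Gamma x a y b z \<subseteq> Gamma (uminus ` z) (uminus ` b) (uminus ` y) (uminus ` a) (uminus ` x)"
proof
  fix \<omega> assume "\<omega> \<in> uminus ` Gamma x a y b z"
  then obtain \<alpha> \<beta> where "\<alpha> \<in> a" "\<beta> \<in> b" "\<alpha> + - \<omega> + \<beta> \<in> y" "\<alpha> + - \<omega> \<in> z" "- \<omega> + \<beta> \<in> x"
    unfolding Gamma_def mem_uminus_image_iff by blast
  then have "- \<beta> \<in> uminus ` b" "- \<alpha> \<in> uminus ` a"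
    and "- \<beta> + \<omega> + - \<alpha> \<in> uminus ` y" "- \<beta> + \<omega> \<in> uminus ` x" "\<omega> + - \<alpha> \<in> uminus ` z"
    by (simp_all only: mem_uminus_image_iff minus_add minus_minus add.assoc)
  then show "\<omega> \<in> Gamma (uminus ` z) (uminus ` b) (uminus ` y) (uminus ` a) (uminus ` x)"
    unfolding Gamma_def by blast
qed

lemma uminus_Gamma:
  "uminus ` Gamma x a y b z = Gamma (uminus ` z) (uminus ` b) (uminus ` y) (uminus ` a) (uminus ` x)"
proof
  have "uminus ` Gamma (uminus ` z) (uminus ` b) (uminus ` y) (uminus ` a) (uminus ` x) \<subseteq> Gamma x a y b z"
    using uminus_Gamma_subset[of "uminus ` z" "uminus ` b" "uminus ` y" "uminus ` a" "uminus ` x"]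
    by (simp add: image_image)
  then have "uminus ` uminus ` Gamma (uminus ` z) (uminus ` b) (uminus ` y) (uminus ` a) (uminus ` x)
      \<subseteq> uminus ` Gamma x a y b z"
    by (rule image_mono)
  then show "Gamma (uminus ` z) (uminus ` b) (uminus ` y) (uminus ` a) (uminus ` x) \<subseteq> uminus ` Gamma x a y b z"
    by (simp add: image_image)
qed (rule uminus_Gamma_subset)

lemma left_transv_Gamma:
  assumes a: "add_subgroup a" and b: "add_subgroup b"
    and x: "x \<top>\<^sub>T b" and z: "z \<top>\<^sub>T b" and y: "a \<top>\<^sub>T y"
  shows "Gamma x a y b z \<top>\<^sub>T b"
proof -
  have neg_a: "uminus ` a = a" and neg_b: "uminus ` b = b"
    using a b by (simp_all add: uminus_image_add_subgroup)
  have "b \<top>\<^sub>T uminus ` z" "b \<top>\<^sub>T uminus ` x" "uminus ` y \<top>\<^sub>T a"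
    using x z y neg_a neg_b
      transv_uminus_iff[where x = z and y = b] transv_uminus_iff[where x = x and y = b]
      transv_uminus_iff[where x = a and y = y]
    by simp_all
  then have "b \<top>\<^sub>T Gamma (uminus ` z) b (uminus ` y) a (uminus ` x)"
    by (rule right_transv_Gamma[OF b a])
  also have "Gamma (uminus ` z) b (uminus ` y) a (uminus ` x) = uminus ` Gamma x a y b z"
    by (simp add: uminus_Gamma neg_a neg_b)
  finally show ?thesis
    using transv_uminus_iff[where x = "Gamma x a y b z" and y = b] neg_b by simp
qed

theorem theorem7p1:
  fixes a b :: "'a::group_add set"
  assumes "add_subgroup a" and "add_subgroup b"
  shows "(\<forall>x y z. x \<in> right_transv a \<and> z \<in> right_transv a \<and> y \<in> left_transv b
            \<longrightarrow> Gamma x a y b z \<in> right_transv a)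
       \<and> (\<forall>x y z. x \<in> left_transv b \<and> z \<in> left_transv b \<and> y \<in> right_transv a
            \<longrightarrow> Gamma x a y b z \<in> left_transv b)"
  using right_transv_Gamma[OF assms] left_transv_Gamma[OF assms]
  unfolding right_transv_def left_transv_def by blast

end
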